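(* Let $\eta:\mathrm{STVB}_2\to M_3(\mathbb{C})$ be a complex homogeneous local representation of $\mathrm{STVB}_2$. Then $\eta$ is equivalent to one of the following thirteen representations $\eta_i$, described by $2\times2$ matrices $S,R,T,G$ with $\eta_i(\sigma_1)=S\oplus 1$, $\eta_i(\sigma_1^{-1})=S^{-1}\oplus 1$, $\eta_i(\rho_1)=R\oplus 1$, $\eta_i(\tau_1)=T\oplus 1$, $\eta_i(\gamma_1)=G\oplus 1$, $\eta_i(\gamma_2)=1\oplus G$ (all parameters complex): \begin{itemize} \item[(1)] $S=\begin{pmatrix}a&b\\ \frac{b}{x^2}&a\end{pmatrix}$, $R=\begin{pmatrix}0&x\\ \frac1x&0\end{pmatrix}$, $T=\begin{pmatrix}f&g\\ \frac{g}{x^2}&f\end{pmatrix}$, $G=\mathrm{diag}(-1,1)$; $a^2x^2-b^2\neq0$, $x\neq0$. \item[(2)] $S=\begin{pmatrix}a&b\\ \frac{b-bz^2}{x^2}&\frac{ax+2bz}{x}\end{pmatrix}$, $R=\begin{pmatrix}-z&x\\ \frac{1-z^2}{x}&z\end{pmatrix}$, $T=\begin{pmatrix}f&g\\ \frac{g-gz^2}{x^2}&\frac{fx+2gz}{x}\end{pmatrix}$, $G=I_2$; $a^2x^2+2abxz-b^2+b^2z^2\neq0$, $x\neq0$. \item[(3)] $S=\begin{pmatrix}a&b\\ c&d\end{pmatrix}$, $R=-I_2$, $T=\begin{pmatrix}f&g\\ \frac{cg}{b}&\frac{bf-ag+dg}{b}\end{pmatrix}$, $G=I_2$; $ad-bc\neq0$,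 $b\neq0$. \item[(4)] $S=\begin{pmatrix}a&b\\ c&d\end{pmatrix}$, $R=I_2$, $T=\begin{pmatrix}f&g\\ \frac{cg}{b}&\frac{bf-ag+dg}{b}\end{pmatrix}$, $G=I_2$; $ad-bc\neq0$, $b\neq0$. \item[(5)] $S=aI_2$, $R=-I_2$, $T=\begin{pmatrix}f&g\\ h&k\end{pmatrix}$, $G=I_2$; $a\neq0$. \item[(6)] $S=\begin{pmatrix}a&0\\ c&d\end{pmatrix}$, $R=-I_2$, $T=\begin{pmatrix}f&0\\ h&\frac{cf-ah+dh}{c}\end{pmatrix}$, $G=I_2$; $ad\neq0$, $c\neq0$. \item[(7)] $S=\begin{pmatrix}a&0\\ c&\frac{-2c+ay}{y}\end{pmatrix}$, $R=\begin{pmatrix}1&0\\ y&-1\end{pmatrix}$, $T=\begin{pmatrix}f&0\\ h&\frac{-2h+fy}{y}\end{pmatrix}$, $G=I_2$; $a(-2c+ay)\neq0$, $y\neq0$. \item[(8)] $S=\begin{pmatrix}a&0\\ c&\frac{2c+ay}{y}\end{pmatrix}$, $R=\begin{pmatrix}-1&0\\ y&1\end{pmatrix}$, $T=\begin{pmatrix}f&0\\ h&\frac{2h+fy}{y}\end{pmatrix}$, $G=I_2$; $a(2c+ay)\neq0$, $y\neq0$. \item[(9)] $S=aI_2$, $R=I_2$, $T=\begin{pmatrix}f&g\\ h&k\end{pmatrix}$, $G=I_2$; $a\neq0$. \item[(10)] $S=\begin{pmatrix}a&0\\ c&d\end{pmatrix}$, $R=I_2$, $T=\begin{pmatrix}f&0\\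 h&\frac{cf-ah+dh}{c}\end{pmatrix}$, $G=I_2$; $ad\neq0$, $c\neq0$. \item[(11)] $S=\mathrm{diag}(a,d)$, $R=\mathrm{diag}(1,-1)$, $T=\mathrm{diag}(f,k)$, $G=I_2$; $ad\neq0$. \item[(12)] $S=\mathrm{diag}(a,d)$, $R=\mathrm{diag}(-1,1)$, $T=\mathrm{diag}(f,k)$, $G=I_2$; $ad\neq0$. \item[(13)] $S=\mathrm{diag}(a,d)$, $R=I_2$, $T=\mathrm{diag}(f,k)$, $G=I_2$; $ad\neq0$. \end{itemize} In addition, if $\eta(\tau_1)$ is invertible, then $\eta$ becomes a representation of $\mathrm{STVG}_2$ (sending $\bar\tau_1$ to $\eta(\tau_1)^{-1}$).
   Context: The singular twisted virtual braid monoid $\mathrm{STVB}_2$ is the monoid generated by $\sigma_1,\sigma_1^{-1},\rho_1,\tau_1,\gamma_1,\gamma_2$ with defining relations $\sigma_1\sigma_1^{-1}=\sigma_1^{-1}\sigma_1=1$, $\rho_1^2=1$, $\gamma_1^2=\gamma_2^2=1$, $\gamma_1\gamma_2=\gamma_2\gamma_1$, $\rho_1\gamma_1=\gamma_2\rho_1$, $\rho_1\sigma_1\rho_1=\gamma_2\gamma_1\sigma_1\gamma_1\gamma_2$, $\sigma_1\tau_1=\tau_1\sigma_1$, $\rho_1\tau_1\rho_1=\gamma_2\gamma_1\tau_1\gamma_1\gamma_2$. The singular twisted virtual braid group $\mathrm{STVG}_2$ is the group with generators $\sigma_1,\rho_1,\tau_1,\bar\tau_1,\gamma_1,\gamma_2$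 satisfying all relations of $\mathrm{STVB}_2$, the same relations with $\bar\tau_1$ in place of $\tau_1$, and $\tau_1\bar\tau_1=\bar\tau_1\tau_1=1$. For a $2\times2$ matrix $M$, $M\oplus1=\begin{pmatrix}M&0\\0&1\end{pmatrix}$ and $1\oplus M=\begin{pmatrix}1&0\\0&M\end{pmatrix}$. A complex local representation $\eta:\mathrm{STVB}_2\to M_3(\mathbb{C})$ is a monoid homomorphism with $\eta(\sigma_1)=S\oplus1$, $\eta(\rho_1)=R\oplus1$, $\eta(\tau_1)=T\oplus1$, $\eta(\gamma_1)=G_1\oplus1$, $\eta(\gamma_2)=1\oplus G_2$, where $S,R,G_1,G_2\in\mathrm{GL}_2(\mathbb{C})$ and $T\in M_2(\mathbb{C})$; it is homogeneous if $G_1=G_2$. Two representations are equivalent if they are conjugate by a fixed invertible matrix. *)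

theory Defs
  imports "Jordan_Normal_Form.Matrix"
begin

definition m2 :: "complex \<Rightarrow> complex \<Rightarrow> complex \<Rightarrow> complex \<Rightarrow> complex mat" where
  "m2 a b c d = mat 2 2 (\<lambda>(i,j). if i = 0 then (if j = 0 then a else b) else (if j = 0 then c else d))"

definition I2 :: "complex mat" where "I2 = m2 1 0 0 1"

definition inv2 :: "complex mat \<Rightarrow> complex mat" where
  "inv2 M = (let a = M $$ (0,0); b = M $$ (0,1); c = M $$ (1,0); d = M $$ (1,1); D = a*d - b*c
             in m2 (d / D) (- b / D) (- c / D) (a / D))"

definition oplus1 :: "complex mat \<Rightarrow> complex mat" where
  "oplus1 M = mat 3 3 (\<lambda>(i,j). if i < 2 \<and> j < 2 then M $$ (i,j) else if i = 2 \<and> j = 2 then 1 else 0)"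

definition one_oplus :: "complex mat \<Rightarrow> complex mat" where
  "one_oplus M = mat 3 3 (\<lambda>(i,j). if 1 \<le> i \<and> 1 \<le> j then M $$ (i-1,j-1) else if i = 0 \<and> j = 0 then 1 else 0)"

definition GL2 :: "complex mat \<Rightarrow> bool" where
  "GL2 M \<longleftrightarrow> M \<in> carrier_mat 2 2 \<and> (\<exists>N \<in> carrier_mat 2 2. M * N = 1\<^sub>m 2 \<and> N * M = 1\<^sub>m 2)"

datatype bgen = Sig | SigInv | Rho | Tau | Gam1 | Gam2

definition ev :: "('g \<Rightarrow> complex mat) \<Rightarrow> 'g list \<Rightarrow> complex mat" where
  "ev eta w = foldr (\<lambda>x acc. eta x * acc) w (1\<^sub>m 3)"

definition STVB2_rels :: "(bgen list \<times> bgen list) list" where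
  "STVB2_rels =
    [([Sig, SigInv], []), ([SigInv, Sig], []),
     ([Rho, Rho], []), ([Gam1, Gam1], []), ([Gam2, Gam2], []),
     ([Gam1, Gam2], [Gam2, Gam1]),
     ([Rho, Gam1], [Gam2, Rho]),
     ([Rho, Sig, Rho], [Gam2, Gam1, Sig, Gam1, Gam2]),
     ([Sig, Tau], [Tau, Sig]),
     ([Rho, Tau, Rho], [Gam2, Gam1, Tau, Gam1, Gam2])]"

text \<open>A monoid homomorphism STVB_2 \<rightarrow> M_3(C), given by the images of the generators
  (by the universal property of the presentation).\<close>
definition STVB2_rep :: "(bgen \<Rightarrow> complex mat) \<Rightarrow> bool" where
  "STVB2_rep eta \<longleftrightarrow> (\<forall>x. eta x \<in> carrier_mat 3 3) \<and> (\<forall>(u,v) \<in> set STVB2_rels. ev eta u = ev eta v)"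

datatype ggen = GSig | GRho | GTau | GTauBar | GGam1 | GGam2

definition STVG2_rels :: "(ggen list \<times> ggen list) list" where
  "STVG2_rels =
    [([GRho, GRho], []), ([GGam1, GGam1], []), ([GGam2, GGam2], []),
     ([GGam1, GGam2], [GGam2, GGam1]),
     ([GRho, GGam1], [GGam2, GRho]),
     ([GRho, GSig, GRho], [GGam2, GGam1, GSig, GGam1, GGam2]),
     ([GSig, GTau], [GTau, GSig]),
     ([GRho, GTau, GRho], [GGam2, GGam1, GTau, GGam1, GGam2]),
     ([GSig, GTauBar], [GTauBar, GSig]),
     ([GRho, GTauBar, GRho], [GGam2, GGam1, GTauBar, GGam1, GGam2]),
     ([GTau, GTauBar], []), ([GTauBar, GTau], [])]"

definition STVG2_rep :: "(ggen \<Rightarrow> complex mat) \<Rightarrow> bool" where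
  "STVG2_rep psi \<longleftrightarrow> (\<forall>x. psi x \<in> carrier_mat 3 3 \<and> invertible_mat (psi x)) \<and>
     (\<forall>(u,v) \<in> set STVG2_rels. ev psi u = ev psi v)"

definition homogeneous_local_rep :: "(bgen \<Rightarrow> complex mat) \<Rightarrow> bool" where
  "homogeneous_local_rep eta \<longleftrightarrow> STVB2_rep eta \<and>
     (\<exists>S R T G. GL2 S \<and> GL2 R \<and> GL2 G \<and> T \<in> carrier_mat 2 2 \<and>
        eta Sig = oplus1 S \<and> eta Rho = oplus1 R \<and> eta Tau = oplus1 T \<and>
        eta Gam1 = oplus1 G \<and> eta Gam2 = one_oplus G)"

definition loc_rep :: "complex mat \<Rightarrow> complex mat \<Rightarrow> complex mat \<Rightarrow> complex mat \<Rightarrow> bgen \<Rightarrow> complex mat" where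
  "loc_rep S R T G x = (case x of
      Sig \<Rightarrow> oplus1 S | SigInv \<Rightarrow> oplus1 (inv2 S) | Rho \<Rightarrow> oplus1 R | Tau \<Rightarrow> oplus1 T
    | Gam1 \<Rightarrow> oplus1 G | Gam2 \<Rightarrow> one_oplus G)"

definition equivalent_rep :: "(bgen \<Rightarrow> complex mat) \<Rightarrow> (bgen \<Rightarrow> complex mat) \<Rightarrow> bool" where
  "equivalent_rep eta eta' \<longleftrightarrow> (\<exists>P Q. P \<in> carrier_mat 3 3 \<and> Q \<in> carrier_mat 3 3 \<and>
      P * Q = 1\<^sub>m 3 \<and> Q * P = 1\<^sub>m 3 \<and> (\<forall>x. P * eta x * Q = eta' x))"

definition family :: "nat \<Rightarrow> complex mat \<Rightarrow> complex mat \<Rightarrow> complex mat \<Rightarrow> complex mat \<Rightarrow> bool" where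
  "family i S R T G \<longleftrightarrow>
   (if i = 1 then (\<exists>a b x f g. a^2*x^2 - b^2 \<noteq> 0 \<and> x \<noteq> 0 \<and>
        S = m2 a b (b/x^2) a \<and> R = m2 0 x (1/x) 0 \<and> T = m2 f g (g/x^2) f \<and> G = m2 (-1) 0 0 1)
    else if i = 2 then (\<exists>a b x z f g. a^2*x^2 + 2*a*b*x*z - b^2 + b^2*z^2 \<noteq> 0 \<and> x \<noteq> 0 \<and>
        S = m2 a b ((b - b*z^2)/x^2) ((a*x + 2*b*z)/x) \<and> R = m2 (-z) x ((1 - z^2)/x) z \<and>
        T = m2 f g ((g - g*z^2)/x^2) ((f*x + 2*g*z)/x) \<and> G = I2)
    else if i = 3 then (\<exists>a b c d f g. a*d - b*c \<noteq> 0 \<and> b \<noteq> 0 \<and>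
        S = m2 a b c d \<and> R = m2 (-1) 0 0 (-1) \<and> T = m2 f g (c*g/b) ((b*f - a*g + d*g)/b) \<and> G = I2)
    else if i = 4 then (\<exists>a b c d f g. a*d - b*c \<noteq> 0 \<and> b \<noteq> 0 \<and>
        S = m2 a b c d \<and> R = I2 \<and> T = m2 f g (c*g/b) ((b*f - a*g + d*g)/b) \<and> G = I2)
    else if i = 5 then (\<exists>a f g h k. a \<noteq> 0 \<and>
        S = m2 a 0 0 a \<and> R = m2 (-1) 0 0 (-1) \<and> T = m2 f g h k \<and> G = I2)
    else if i = 6 then (\<exists>a c d f h. a*d \<noteq> 0 \<and> c \<noteq> 0 \<and>
        S = m2 a 0 c d \<and> R = m2 (-1) 0 0 (-1) \<and> T = m2 f 0 h ((c*f - a*h + d*h)/c) \<and> G = I2)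
    else if i = 7 then (\<exists>a c y f h. a*(-2*c + a*y) \<noteq> 0 \<and> y \<noteq> 0 \<and>
        S = m2 a 0 c ((-2*c + a*y)/y) \<and> R = m2 1 0 y (-1) \<and> T = m2 f 0 h ((-2*h + f*y)/y) \<and> G = I2)
    else if i = 8 then (\<exists>a c y f h. a*(2*c + a*y) \<noteq> 0 \<and> y \<noteq> 0 \<and>
        S = m2 a 0 c ((2*c + a*y)/y) \<and> R = m2 (-1) 0 y 1 \<and> T = m2 f 0 h ((2*h + f*y)/y) \<and> G = I2)
    else if i = 9 then (\<exists>a f g h k. a \<noteq> 0 \<and>
        S = m2 a 0 0 a \<and> R = I2 \<and> T = m2 f g h k \<and> G = I2)
    else if i = 10 then (\<exists>a c d f h. a*d \<noteq> 0 \<and> c \<noteq> 0 \<and>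
        S = m2 a 0 c d \<and> R = I2 \<and> T = m2 f 0 h ((c*f - a*h + d*h)/c) \<and> G = I2)
    else if i = 11 then (\<exists>a d f k. a*d \<noteq> 0 \<and>
        S = m2 a 0 0 d \<and> R = m2 1 0 0 (-1) \<and> T = m2 f 0 0 k \<and> G = I2)
    else if i = 12 then (\<exists>a d f k. a*d \<noteq> 0 \<and>
        S = m2 a 0 0 d \<and> R = m2 (-1) 0 0 1 \<and> T = m2 f 0 0 k \<and> G = I2)
    else if i = 13 then (\<exists>a d f k. a*d \<noteq> 0 \<and>
        S = m2 a 0 0 d \<and> R = I2 \<and> T = m2 f 0 0 k \<and> G = I2)
    else False)"

definition ext_G :: "(bgen \<Rightarrow> complex mat) \<Rightarrow> complex mat \<Rightarrow> ggen \<Rightarrow> complex mat" where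
  "ext_G eta Tb x = (case x of GSig \<Rightarrow> eta Sig | GRho \<Rightarrow> eta Rho | GTau \<Rightarrow> eta Tau
     | GTauBar \<Rightarrow> Tb | GGam1 \<Rightarrow> eta Gam1 | GGam2 \<Rightarrow> eta Gam2)"

end

theory Submission
  imports Defs
begin

text \<open>
  Read in 3x3 blocks, the relations \<open>\<gamma>\<^sub>1\<^sup>2 = 1\<close>, \<open>\<gamma>\<^sub>1\<gamma>\<^sub>2 = \<gamma>\<^sub>2\<gamma>\<^sub>1\<close> and
  \<open>\<rho>\<^sub>1\<gamma>\<^sub>1 = \<gamma>\<^sub>2\<rho>\<^sub>1\<close> force \<open>G = diag(\<epsilon>, 1)\<close> with \<open>\<epsilon> = \<plusminus>1\<close>, and \<open>\<epsilon> = -1\<close> only if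
  R has zero diagonal. In both cases \<open>\<gamma>\<^sub>2\<gamma>\<^sub>1 = (\<epsilon> I\<^sub>2) \<oplus> 1\<close> is central in the block
  \<open>M \<oplus> 1\<close>, so the remaining relations say that R is an involution commuting with S and T,
  and that S commutes with T. For an antidiagonal R this is family (1). For \<open>G = I\<^sub>2\<close> a case
  distinction on the entries of R (upper right entry nonzero; \<open>R = \<plusminus>I\<^sub>2\<close>; R lower triangular
  but not scalar) together with the description of the centraliser of S gives families
  (2)--(13), except for \<open>R = -I\<^sub>2\<close> with S, T diagonal and S not scalar; conjugating by
  \<open>[[1,1],[0,1]] \<oplus> 1\<close> moves that case into family (3).
  For \<open>STVG\<^sub>2\<close>, the image of \<open>\<tau>\<^sub>1\<close> is inverted, and the relations for \<open>\<bar>\<tau>\<^sub>1\<close> are the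
  inverses of those for \<open>\<tau>\<^sub>1\<close>.
\<close>

lemmas square_mat_simps = assoc_mult_mat[of _ n n _ n _ n] mult_carrier_mat[of _ n n _ n]
  left_mult_one_mat[of _ n n] right_mult_one_mat[of _ n n] for n

lemma inverse_mat_unique:
  fixes A B C :: "'a::semiring_1 mat"
  assumes "A \<in> carrier_mat n n" "B \<in> carrier_mat n n" "C \<in> carrier_mat n n"
    and "A * B = 1\<^sub>m n" "C * A = 1\<^sub>m n"
  shows "B = C"
proof -
  have "B = (C * A) * B" using assms(2,5) by (simp add: square_mat_simps)
  also have "\<dots> = C * (A * B)" using assms(1-3) by (simp add: square_mat_simps)
  finally show ?thesis using assms(3,4) by (simp add: square_mat_simps)
qed

lemma invertible_matI:
  fixes A B :: "'a::semiring_1 mat"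
  assumes "A \<in> carrier_mat n n" "B \<in> carrier_mat n n" "A * B = 1\<^sub>m n" "B * A = 1\<^sub>m n"
  shows "invertible_mat A"
  using assms unfolding invertible_mat_def inverts_mat_def by auto

lemma involution_conj_eq_imp_commute:
  fixes A B :: "'a::semiring_1 mat"
  assumes "A \<in> carrier_mat n n" "B \<in> carrier_mat n n"
    and "A * A = 1\<^sub>m n" "A * (B * A) = B"
  shows "A * B = B * A"
proof -
  have "B * A = (A * (B * A)) * A" using assms(4) by simp
  also have "\<dots> = A * B * (A * A)" using assms(1,2) by (simp add: square_mat_simps)
  finally show ?thesis using assms(1-3) by (simp add: square_mat_simps)
qed

lemma commute_imp_commute_inverse:
  fixes S T T' :: "'a::semiring_1 mat"
  assumes "S \<in> carrier_mat n n" "T \<in> carrier_mat n n" "T' \<in> carrier_mat n n"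
    and "S * T = T * S" "T * T' = 1\<^sub>m n" "T' * T = 1\<^sub>m n"
  shows "S * T' = T' * S"
proof -
  have "T' * S = T' * S * (T * T')" using assms(1,3,5) by (simp add: square_mat_simps)
  also have "\<dots> = T' * (S * T) * T'" using assms(1-3) by (simp add: square_mat_simps)
  also have "\<dots> = (T' * T) * (S * T')" using assms(1-4) by (simp add: square_mat_simps)
  finally show ?thesis using assms(1,3,6) by (simp add: square_mat_simps)
qed

text \<open>Both sides of the conclusion are inverses of \<open>P T Q = P' T Q'\<close>.\<close>
lemma conj_eq_imp_conj_inverse_eq:
  fixes P Q P' Q' T T' :: "'a::semiring_1 mat"
  assumes carrier: "P \<in> carrier_mat n n" "Q \<in> carrier_mat n n" "P' \<in> carrier_mat n n"
      "Q' \<in> carrier_mat n n" "T \<in> carrier_mat n n" "T' \<in> carrier_mat n n"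
    and inv: "P * Q = 1\<^sub>m n" "Q * P = 1\<^sub>m n" "P' * Q' = 1\<^sub>m n" "Q' * P' = 1\<^sub>m n"
      "T * T' = 1\<^sub>m n" "T' * T = 1\<^sub>m n"
    and eq: "P * T * Q = P' * T * Q'"
  shows "P * T' * Q = P' * T' * Q'"
proof (rule inverse_mat_unique)
  have "P * T * Q * (P * T' * Q) = P * (T * (Q * P) * T') * Q" using carrier by (simp add: square_mat_simps)
  then show "P * T * Q * (P * T' * Q) = 1\<^sub>m n" using carrier inv by (simp add: square_mat_simps)
  have "P' * T' * Q' * (P' * T * Q') = P' * (T' * (Q' * P') * T) * Q'" using carrier by (simp add: square_mat_simps)
  then show "P' * T' * Q' * (P * T * Q) = 1\<^sub>m n" using carrier inv eq by (simp add: square_mat_simps)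
qed (use carrier in auto)

definition mat3 :: "complex \<Rightarrow> complex \<Rightarrow> complex \<Rightarrow> complex \<Rightarrow> complex \<Rightarrow> complex \<Rightarrow>
    complex \<Rightarrow> complex \<Rightarrow> complex \<Rightarrow> complex mat" where
  "mat3 a b c d e f g h k = mat 3 3 (\<lambda>(i,j).
     if i = 0 then (if j = 0 then a else if j = 1 then b else c)
     else if i = 1 then (if j = 0 then d else if j = 1 then e else f)
     else (if j = 0 then g else if j = 1 then h else k))"

lemma less_3_cases: "(i::nat) < 3 \<longleftrightarrow> i = 0 \<or> i = 1 \<or> i = 2"
  by auto

lemma less_2_cases: "(i::nat) < 2 \<longleftrightarrow> i = 0 \<or> i = 1"
  by auto

lemma mat3_mult:
  "mat3 a b c d e f g h k * mat3 a' b' c' d' e' f' g' h' k' =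
   mat3 (a*a' + b*d' + c*g') (a*b' + b*e' + c*h') (a*c' + b*f' + c*k')
        (d*a' + e*d' + f*g') (d*b' + e*e' + f*h') (d*c' + e*f' + f*k')
        (g*a' + h*d' + k*g') (g*b' + h*e' + k*h') (g*c' + h*f' + k*k')"
  by (rule eq_matI) (auto simp: mat3_def scalar_prod_def numeral_3_eq_3 less_3_cases)

lemma mat3_eq_iff:
  "mat3 a b c d e f g h k = mat3 a' b' c' d' e' f' g' h' k' \<longleftrightarrow>
   a = a' \<and> b = b' \<and> c = c' \<and> d = d' \<and> e = e' \<and> f = f' \<and> g = g' \<and> h = h' \<and> k = k'"
proof
  assume eq: "mat3 a b c d e f g h k = mat3 a' b' c' d' e' f' g' h' k'"
  have "mat3 a b c d e f g h k $$ (i, j) = mat3 a' b' c' d' e' f' g' h' k' $$ (i, j)" for i j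
    using eq by simp
  from this[of 0 0] this[of 0 1] this[of 0 2] this[of 1 0] this[of 1 1] this[of 1 2]
    this[of 2 0] this[of 2 1] this[of 2 2]
  show "a = a' \<and> b = b' \<and> c = c' \<and> d = d' \<and> e = e' \<and> f = f' \<and> g = g' \<and> h = h' \<and> k = k'"
    by (simp add: mat3_def)
qed simp

lemma mat3_carrier: "mat3 a b c d e f g h k \<in> carrier_mat 3 3"
  by (simp add: mat3_def)

lemma one_mat_3_eq_mat3: "1\<^sub>m 3 = mat3 1 0 0 0 1 0 0 0 1"
  by (rule eq_matI) (auto simp: mat3_def less_3_cases)

lemma m2_carrier [simp]: "m2 a b c d \<in> carrier_mat 2 2"
  by (simp add: m2_def)

lemma m2_mult: "m2 a b c d * m2 a' b' c' d' = m2 (a*a' + b*c') (a*b' + b*d') (c*a' + d*c') (c*b' + d*d')"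
  by (rule eq_matI) (auto simp: m2_def scalar_prod_def numeral_2_eq_2 less_2_cases)

lemma m2_eq_iff: "m2 a b c d = m2 a' b' c' d' \<longleftrightarrow> a = a' \<and> b = b' \<and> c = c' \<and> d = d'"
proof
  assume eq: "m2 a b c d = m2 a' b' c' d'"
  have "m2 a b c d $$ (i, j) = m2 a' b' c' d' $$ (i, j)" for i j
    using eq by simp
  from this[of 0 0] this[of 0 1] this[of 1 0] this[of 1 1]
  show "a = a' \<and> b = b' \<and> c = c' \<and> d = d'" by (simp add: m2_def)
qed simp

lemma one_mat_2_eq_m2: "1\<^sub>m 2 = m2 1 0 0 1"
  by (rule eq_matI) (auto simp: m2_def less_2_cases)

lemma carrier_mat_2_obtain_m2:
  assumes "M \<in> carrier_mat 2 2"
  obtains a b c d where "M = m2 a b c d"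
proof
  show "M = m2 (M $$ (0,0)) (M $$ (0,1)) (M $$ (1,0)) (M $$ (1,1))"
    using assms by (intro eq_matI) (auto simp: m2_def less_2_cases)
qed

lemma oplus1_m2: "oplus1 (m2 a b c d) = mat3 a b 0 c d 0 0 0 1"
  by (rule eq_matI) (auto simp: mat3_def m2_def oplus1_def less_3_cases)

lemma one_oplus_m2: "one_oplus (m2 a b c d) = mat3 1 0 0 0 a b 0 c d"
  by (rule eq_matI) (auto simp: mat3_def m2_def one_oplus_def less_3_cases)

lemma inv2_m2:
  "inv2 (m2 a b c d) = m2 (d/(a*d - b*c)) (-b/(a*d - b*c)) (-c/(a*d - b*c)) (a/(a*d - b*c))"
  by (simp add: inv2_def m2_def Let_def)

lemma inv2_carrier [simp]: "inv2 M \<in> carrier_mat 2 2"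
  by (simp add: inv2_def Let_def)

lemma oplus1_carrier [simp]: "oplus1 A \<in> carrier_mat 3 3"
  by (simp add: oplus1_def)

lemma one_oplus_carrier [simp]: "one_oplus A \<in> carrier_mat 3 3"
  by (simp add: one_oplus_def)

lemma oplus1_mult:
  assumes "A \<in> carrier_mat 2 2" "B \<in> carrier_mat 2 2"
  shows "oplus1 A * oplus1 B = oplus1 (A * B)"
proof -
  obtain a b c d where "A = m2 a b c d" using assms(1) by (rule carrier_mat_2_obtain_m2)
  moreover obtain a' b' c' d' where "B = m2 a' b' c' d'" using assms(2) by (rule carrier_mat_2_obtain_m2)
  ultimately show ?thesis by (simp add: oplus1_m2 m2_mult mat3_mult)
qed

lemma oplus1_inject:
  assumes "A \<in> carrier_mat 2 2" "B \<in> carrier_mat 2 2"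
  shows "oplus1 A = oplus1 B \<longleftrightarrow> A = B"
proof -
  obtain a b c d where "A = m2 a b c d" using assms(1) by (rule carrier_mat_2_obtain_m2)
  moreover obtain a' b' c' d' where "B = m2 a' b' c' d'" using assms(2) by (rule carrier_mat_2_obtain_m2)
  ultimately show ?thesis by (simp add: oplus1_m2 m2_eq_iff mat3_eq_iff)
qed

lemma oplus1_one: "oplus1 (1\<^sub>m 2) = 1\<^sub>m 3"
  by (simp add: one_mat_2_eq_m2 oplus1_m2 one_mat_3_eq_mat3)

lemma GL2_m2_det_nonzero:
  assumes "GL2 (m2 a b c d)"
  shows "a*d - b*c \<noteq> 0"
proof -
  obtain N where N: "N \<in> carrier_mat 2 2" "m2 a b c d * N = 1\<^sub>m 2"
    using assms unfolding GL2_def by blast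
  obtain n1 n2 n3 n4 where "N = m2 n1 n2 n3 n4" using N(1) by (rule carrier_mat_2_obtain_m2)
  with N(2) have e: "a*n1 + b*n3 = 1" "a*n2 + b*n4 = 0" "c*n1 + d*n3 = 0" "c*n2 + d*n4 = 1"
    by (simp_all add: m2_mult one_mat_2_eq_m2 m2_eq_iff)
  have "(a*d - b*c) * (n1*n4 - n2*n3) = (a*n1 + b*n3)*(c*n2 + d*n4) - (a*n2 + b*n4)*(c*n1 + d*n3)"
    by (simp add: algebra_simps)
  with e show ?thesis by auto
qed

lemma inv2_mult_self:
  assumes "GL2 S"
  shows "inv2 S * S = 1\<^sub>m 2"
proof -
  obtain a b c d where S: "S = m2 a b c d"
    using assms unfolding GL2_def by (blast elim: carrier_mat_2_obtain_m2)
  define D where "D = a*d - b*c"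
  have "D \<noteq> 0" using assms S GL2_m2_det_nonzero by (simp add: D_def)
  then show ?thesis
    unfolding S inv2_m2 D_def[symmetric] m2_mult one_mat_2_eq_m2 m2_eq_iff
    by (simp add: field_simps) (simp add: D_def algebra_simps)
qed

section \<open>Normal form of a homogeneous local representation\<close>

lemma STVB2_rep_relations:
  assumes "STVB2_rep eta"
  shows "eta Sig * eta SigInv = 1\<^sub>m 3" "eta SigInv * eta Sig = 1\<^sub>m 3"
    "eta Rho * eta Rho = 1\<^sub>m 3" "eta Gam1 * eta Gam1 = 1\<^sub>m 3" "eta Gam2 * eta Gam2 = 1\<^sub>m 3"
    "eta Gam1 * eta Gam2 = eta Gam2 * eta Gam1" "eta Rho * eta Gam1 = eta Gam2 * eta Rho"
    "eta Rho * (eta Sig * eta Rho) = eta Gam2 * (eta Gam1 * (eta Sig * (eta Gam1 * eta Gam2)))"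
    "eta Sig * eta Tau = eta Tau * eta Sig"
    "eta Rho * (eta Tau * eta Rho) = eta Gam2 * (eta Gam1 * (eta Tau * (eta Gam1 * eta Gam2)))"
proof -
  have carrier: "\<And>x. eta x \<in> carrier_mat 3 3"
    and rels: "\<forall>(u, v) \<in> set STVB2_rels. ev eta u = ev eta v"
    using assms unfolding STVB2_rep_def by blast+
  show "eta Sig * eta SigInv = 1\<^sub>m 3" "eta SigInv * eta Sig = 1\<^sub>m 3"
    "eta Rho * eta Rho = 1\<^sub>m 3" "eta Gam1 * eta Gam1 = 1\<^sub>m 3" "eta Gam2 * eta Gam2 = 1\<^sub>m 3"
    "eta Gam1 * eta Gam2 = eta Gam2 * eta Gam1" "eta Rho * eta Gam1 = eta Gam2 * eta Rho"
    "eta Rho * (eta Sig * eta Rho) = eta Gam2 * (eta Gam1 * (eta Sig * (eta Gam1 * eta Gam2)))"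
    "eta Sig * eta Tau = eta Tau * eta Sig"
    "eta Rho * (eta Tau * eta Rho) = eta Gam2 * (eta Gam1 * (eta Tau * (eta Gam1 * eta Gam2)))"
    using rels by (simp_all add: STVB2_rels_def ev_def right_mult_one_mat[OF carrier])
qed

lemma gamma_relations_cases:
  assumes "G \<in> carrier_mat 2 2" "R \<in> carrier_mat 2 2"
    and "oplus1 G * oplus1 G = 1\<^sub>m 3" "oplus1 G * one_oplus G = one_oplus G * oplus1 G"
      "oplus1 R * oplus1 G = one_oplus G * oplus1 R"
  shows "G = I2 \<or> G = m2 (-1) 0 0 1 \<and> R $$ (0,0) = 0 \<and> R $$ (1,1) = 0"
proof -
  obtain g1 g2 g3 g4 where G: "G = m2 g1 g2 g3 g4" using assms(1) by (rule carrier_mat_2_obtain_m2)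
  obtain r1 r2 r3 r4 where R: "R = m2 r1 r2 r3 r4" using assms(2) by (rule carrier_mat_2_obtain_m2)
  have g23: "g2 = 0" "g3 = 0"
    using assms(4) by (simp_all add: G oplus1_m2 one_oplus_m2 mat3_mult mat3_eq_iff)
  have g4: "g4 = 1" and "g1^2 = 1"
    using assms(3,5) g23
    by (simp_all add: G R oplus1_m2 one_oplus_m2 mat3_mult mat3_eq_iff one_mat_3_eq_mat3 power2_eq_square)
  have r: "r1 = 0 \<or> g1 = 1" "r4 = 0 \<or> g1 = 1"
    using assms(5) g23 g4 by (auto simp: G R oplus1_m2 one_oplus_m2 mat3_mult mat3_eq_iff)
  from \<open>g1^2 = 1\<close> consider "g1 = 1" | "g1 = -1" by (auto simp: power2_eq_1_iff)
  then show ?thesis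
  proof cases
    case 1
    then show ?thesis by (simp add: G g23 g4 I2_def)
  next
    case 2
    then have "r1 = 0" "r4 = 0" using r by auto
    with 2 show ?thesis by (simp add: G R g23 g4 m2_def)
  qed
qed

lemma gamma_conj_oplus1:
  assumes "G = I2 \<or> G = m2 (-1) 0 0 1" "X \<in> carrier_mat 2 2"
  shows "one_oplus G * (oplus1 G * (oplus1 X * (oplus1 G * one_oplus G))) = oplus1 X"
proof -
  obtain a b c d where "X = m2 a b c d" using assms(2) by (rule carrier_mat_2_obtain_m2)
  with assms(1) show ?thesis by (auto simp: I2_def oplus1_m2 one_oplus_m2 mat3_mult)
qed

lemma homogeneous_local_rep_normal_form:
  assumes "homogeneous_local_rep eta"
  obtains S R T G where "eta = loc_rep S R T G" "GL2 S"
    "S \<in> carrier_mat 2 2" "R \<in> carrier_mat 2 2" "T \<in> carrier_mat 2 2"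
    "R * R = 1\<^sub>m 2" "R * S = S * R" "R * T = T * R" "S * T = T * S"
    "G = I2 \<or> G = m2 (-1) 0 0 1 \<and> R $$ (0,0) = 0 \<and> R $$ (1,1) = 0"
proof -
  obtain S R T G where rep: "STVB2_rep eta" and GL2: "GL2 S" "GL2 R" "GL2 G"
    and T: "T \<in> carrier_mat 2 2"
    and eta: "eta Sig = oplus1 S" "eta Rho = oplus1 R" "eta Tau = oplus1 T"
      "eta Gam1 = oplus1 G" "eta Gam2 = one_oplus G"
    using assms unfolding homogeneous_local_rep_def by blast
  have S: "S \<in> carrier_mat 2 2" and R: "R \<in> carrier_mat 2 2" and G: "G \<in> carrier_mat 2 2"
    using GL2 unfolding GL2_def by blast+
  note rels = STVB2_rep_relations[OF rep, unfolded eta]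
  have "eta SigInv = oplus1 (inv2 S)"
  proof (rule inverse_mat_unique)
    show "oplus1 S * eta SigInv = 1\<^sub>m 3" by (fact rels(1))
    show "oplus1 (inv2 S) * oplus1 S = 1\<^sub>m 3"
      using GL2(1) S by (simp add: oplus1_mult inv2_mult_self oplus1_one)
  qed (use rep in \<open>auto simp: STVB2_rep_def\<close>)
  then have "eta = loc_rep S R T G"
    by (auto simp: loc_rep_def eta split: bgen.split)
  moreover have gamma: "G = I2 \<or> G = m2 (-1) 0 0 1 \<and> R $$ (0,0) = 0 \<and> R $$ (1,1) = 0"
    using G R rels(4,6,7) by (rule gamma_relations_cases)
  moreover have RR: "R * R = 1\<^sub>m 2"
    using rels(3) R by (simp add: oplus1_mult oplus1_one[symmetric] oplus1_inject)
  moreover have "R * S = S * R" "R * T = T * R"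
    using rels(8,10) gamma S T R RR
    by (auto simp: gamma_conj_oplus1 oplus1_mult oplus1_inject intro: involution_conj_eq_imp_commute)
  moreover have "S * T = T * S"
    using rels(9) S T by (simp add: oplus1_mult oplus1_inject)
  ultimately show ?thesis using that GL2(1) S R T by blast
qed

section \<open>Classification\<close>

lemma family_1I:
  "a^2*x^2 - b^2 \<noteq> 0 \<Longrightarrow> x \<noteq> 0 \<Longrightarrow>
   family 1 (m2 a b (b/x^2) a) (m2 0 x (1/x) 0) (m2 f g (g/x^2) f) (m2 (-1) 0 0 1)"
  unfolding family_def by simp blast

lemma family_2I:
  "a^2*x^2 + 2*a*b*x*z - b^2 + b^2*z^2 \<noteq> 0 \<Longrightarrow> x \<noteq> 0 \<Longrightarrow>
   family 2 (m2 a b ((b - b*z^2)/x^2) ((a*x + 2*b*z)/x)) (m2 (-z) x ((1 - z^2)/x) z)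
     (m2 f g ((g - g*z^2)/x^2) ((f*x + 2*g*z)/x)) I2"
  unfolding family_def by simp blast

lemma family_3I:
  "a*d - b*c \<noteq> 0 \<Longrightarrow> b \<noteq> 0 \<Longrightarrow>
   family 3 (m2 a b c d) (m2 (-1) 0 0 (-1)) (m2 f g (c*g/b) ((b*f - a*g + d*g)/b)) I2"
  unfolding family_def by simp blast

lemma family_4I:
  "a*d - b*c \<noteq> 0 \<Longrightarrow> b \<noteq> 0 \<Longrightarrow>
   family 4 (m2 a b c d) (m2 1 0 0 1) (m2 f g (c*g/b) ((b*f - a*g + d*g)/b)) I2"
  unfolding family_def I2_def by simp blast

lemma family_5I: "a \<noteq> 0 \<Longrightarrow> family 5 (m2 a 0 0 a) (m2 (-1) 0 0 (-1)) (m2 f g h k) I2"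
  unfolding family_def by simp blast

lemma family_6I:
  "a*d \<noteq> 0 \<Longrightarrow> c \<noteq> 0 \<Longrightarrow>
   family 6 (m2 a 0 c d) (m2 (-1) 0 0 (-1)) (m2 f 0 h ((c*f - a*h + d*h)/c)) I2"
  unfolding family_def by simp blast

lemma family_7I:
  "a*(-2*c + a*y) \<noteq> 0 \<Longrightarrow> y \<noteq> 0 \<Longrightarrow>
   family 7 (m2 a 0 c ((-2*c + a*y)/y)) (m2 1 0 y (-1)) (m2 f 0 h ((-2*h + f*y)/y)) I2"
  unfolding family_def by simp blast

lemma family_8I:
  "a*(2*c + a*y) \<noteq> 0 \<Longrightarrow> y \<noteq> 0 \<Longrightarrow>
   family 8 (m2 a 0 c ((2*c + a*y)/y)) (m2 (-1) 0 y 1) (m2 f 0 h ((2*h + f*y)/y)) I2"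
  unfolding family_def by simp blast

lemma family_9I: "a \<noteq> 0 \<Longrightarrow> family 9 (m2 a 0 0 a) (m2 1 0 0 1) (m2 f g h k) I2"
  unfolding family_def I2_def by simp blast

lemma family_10I:
  "a*d \<noteq> 0 \<Longrightarrow> c \<noteq> 0 \<Longrightarrow>
   family 10 (m2 a 0 c d) (m2 1 0 0 1) (m2 f 0 h ((c*f - a*h + d*h)/c)) I2"
  unfolding family_def I2_def by simp blast

lemma family_11I: "a*d \<noteq> 0 \<Longrightarrow> family 11 (m2 a 0 0 d) (m2 1 0 0 (-1)) (m2 f 0 0 k) I2"
  unfolding family_def by simp blast

lemma family_12I: "a*d \<noteq> 0 \<Longrightarrow> family 12 (m2 a 0 0 d) (m2 (-1) 0 0 1) (m2 f 0 0 k) I2"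
  unfolding family_def by simp blast

lemma family_13I: "a*d \<noteq> 0 \<Longrightarrow> family 13 (m2 a 0 0 d) (m2 1 0 0 1) (m2 f 0 0 k) I2"
  unfolding family_def I2_def by simp blast

lemma family_index: "family i S R T G \<Longrightarrow> i \<in> {1..13}"
  by (simp add: family_def split: if_splits)

definition equivalent_to_family :: "(bgen \<Rightarrow> complex mat) \<Rightarrow> bool" where
  "equivalent_to_family eta \<longleftrightarrow>
     (\<exists>i \<in> {1..13}. \<exists>S R T G. family i S R T G \<and> equivalent_rep eta (loc_rep S R T G))"

lemma equivalent_rep_refl:
  assumes "\<And>x. eta x \<in> carrier_mat 3 3"
  shows "equivalent_rep eta eta"
  unfolding equivalent_rep_def
  by (rule exI[of _ "1\<^sub>m 3"], rule exI[of _ "1\<^sub>m 3"])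
    (simp add: left_mult_one_mat[OF assms] right_mult_one_mat[OF assms])

lemma loc_rep_carrier: "loc_rep S R T G x \<in> carrier_mat 3 3"
  by (cases x) (simp_all add: loc_rep_def)

lemma family_imp_equivalent_to_family:
  assumes "family i S R T G"
  shows "equivalent_to_family (loc_rep S R T G)"
  using assms family_index[OF assms] equivalent_rep_refl[of "loc_rep S R T G", OF loc_rep_carrier]
  unfolding equivalent_to_family_def by blast

lemma family_1_of_antidiagonal_involution:
  assumes "S \<in> carrier_mat 2 2" "R \<in> carrier_mat 2 2" "T \<in> carrier_mat 2 2" "GL2 S"
    and "R * R = 1\<^sub>m 2" "R * S = S * R" "R * T = T * R" "R $$ (0,0) = 0" "R $$ (1,1) = 0"
  shows "family 1 S R T (m2 (-1) 0 0 1)"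
proof -
  obtain s1 s2 s3 s4 where S: "S = m2 s1 s2 s3 s4" using assms(1) by (rule carrier_mat_2_obtain_m2)
  obtain r1 x r3 r4 where R': "R = m2 r1 x r3 r4" using assms(2) by (rule carrier_mat_2_obtain_m2)
  obtain t1 t2 t3 t4 where T: "T = m2 t1 t2 t3 t4" using assms(3) by (rule carrier_mat_2_obtain_m2)
  have "r1 = 0" "r4 = 0" using R' assms(8,9) by (simp_all add: m2_def)
  with R' have R: "R = m2 0 x r3 0" by simp
  have "x * r3 = 1" using assms(5) by (simp add: R m2_mult one_mat_2_eq_m2 m2_eq_iff)
  then have x: "x \<noteq> 0" and r3: "r3 = 1/x" by (auto simp: eq_divide_eq mult.commute)
  have commute: "c = b/x^2 \<and> d = a" if "R * m2 a b c d = m2 a b c d * R" for a b c d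
  proof -
    have "x * c = b * r3" "x * d = a * x" using that by (simp_all add: R m2_mult m2_eq_iff)
    then show ?thesis using x by (simp add: r3 field_simps power2_eq_square)
  qed
  have s: "s3 = s2/x^2" "s4 = s1" and t: "t3 = t2/x^2" "t4 = t1"
    using commute assms(6,7) by (simp_all add: S T)
  have "(s1*s4 - s2*s3) * x^2 = s1^2*x^2 - s2^2"
    using x by (simp add: s field_simps power2_eq_square)
  then have "s1^2*x^2 - s2^2 \<noteq> 0"
    using GL2_m2_det_nonzero assms(4) x by (auto simp: S)
  then show ?thesis unfolding S R T s t r3 using x by (rule family_1I)
qed

lemma family_2_of_nontriangular_involution:
  assumes RR: "m2 r1 r2 r3 r4 * m2 r1 r2 r3 r4 = 1\<^sub>m 2"
    and RS: "m2 r1 r2 r3 r4 * m2 s1 s2 s3 s4 = m2 s1 s2 s3 s4 * m2 r1 r2 r3 r4"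
    and RT: "m2 r1 r2 r3 r4 * m2 t1 t2 t3 t4 = m2 t1 t2 t3 t4 * m2 r1 r2 r3 r4"
    and det: "s1*s4 - s2*s3 \<noteq> 0" and r2: "r2 \<noteq> 0"
  shows "family 2 (m2 s1 s2 s3 s4) (m2 r1 r2 r3 r4) (m2 t1 t2 t3 t4) I2"
proof -
  have RR': "r1*r1 + r2*r3 = 1" "r1*r2 + r2*r4 = 0"
    using RR by (simp_all add: m2_mult one_mat_2_eq_m2 m2_eq_iff)
  have "r2 * (r1 + r4) = 0" using RR'(2) by (simp add: algebra_simps)
  then have r1: "r1 = - r4" using r2 by (simp add: eq_neg_iff_add_eq_0)
  have "r3 * r2 = 1 - r4^2" using RR'(1) by (simp add: r1 algebra_simps power2_eq_square)
  then have r3: "r3 = (1 - r4^2)/r2" using r2 by (simp add: eq_divide_eq)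
  have commute: "c = (b - b*r4^2)/r2^2 \<and> d = (a*r2 + 2*b*r4)/r2"
    if "m2 r1 r2 r3 r4 * m2 a b c d = m2 a b c d * m2 r1 r2 r3 r4" for a b c d
  proof -
    have "r1*a + r2*c = a*r1 + b*r3" "r1*b + r2*d = a*r2 + b*r4"
      using that by (simp_all add: m2_mult m2_eq_iff)
    then have "c * r2 = b * r3" "d * r2 = a*r2 + 2*b*r4"
      by (simp_all add: r1 algebra_simps)
    then have "c * r2^2 = b - b*r4^2" "d = (a*r2 + 2*b*r4)/r2"
      using r2 by (simp_all add: r3 eq_divide_eq power2_eq_square algebra_simps)
    then show ?thesis using r2 by (simp add: eq_divide_eq)
  qed
  have s: "s3 = (s2 - s2*r4^2)/r2^2" "s4 = (s1*r2 + 2*s2*r4)/r2"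
    and t: "t3 = (t2 - t2*r4^2)/r2^2" "t4 = (t1*r2 + 2*t2*r4)/r2"
    using commute[OF RS] commute[OF RT] by simp_all
  have "(s1*s4 - s2*s3) * r2^2 = s1^2*r2^2 + 2*s1*s2*r2*r4 - s2^2 + s2^2*r4^2"
    using r2 by (simp add: s field_simps power2_eq_square)
  then have "s1^2*r2^2 + 2*s1*s2*r2*r4 - s2^2 + s2^2*r4^2 \<noteq> 0" using det r2 by auto
  then show ?thesis unfolding s t r1 r3 using r2 by (rule family_2I)
qed

lemma m2_commute_cases:
  assumes "m2 s1 s2 s3 s4 * m2 t1 t2 t3 t4 = m2 t1 t2 t3 t4 * m2 s1 s2 s3 s4"
  obtains (upper) "s2 \<noteq> 0" "t3 = s3*t2/s2" "t4 = (s2*t1 - s1*t2 + s4*t2)/s2"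
    | (lower) "s2 = 0" "s3 \<noteq> 0" "t2 = 0" "t4 = (s3*t1 - s1*t3 + s4*t3)/s3"
    | (scalar) "s2 = 0" "s3 = 0" "s4 = s1"
    | (diagonal) "s2 = 0" "s3 = 0" "s4 \<noteq> s1" "t2 = 0" "t3 = 0"
proof -
  have entries: "s1*t1 + s2*t3 = t1*s1 + t2*s3" "s1*t2 + s2*t4 = t1*s2 + t2*s4"
    "s3*t1 + s4*t3 = t3*s1 + t4*s3"
    using assms by (simp_all add: m2_mult m2_eq_iff)
  have e: "s2*t3 = t2*s3" "s2*t4 = t1*s2 + t2*s4 - s1*t2" "s3*t1 + s4*t3 = t3*s1 + t4*s3"
    using entries by (simp_all add: algebra_simps)
  consider "s2 \<noteq> 0" | "s2 = 0" "s3 \<noteq> 0" | "s2 = 0" "s3 = 0" "s4 = s1" | "s2 = 0" "s3 = 0" "s4 \<noteq> s1"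
    by blast
  then show ?thesis
  proof cases
    case 1
    moreover from e(1) 1 have "t3 = s3*t2/s2" by (simp add: eq_divide_eq mult.commute)
    moreover from e(2) 1 have "t4 = (s2*t1 - s1*t2 + s4*t2)/s2" by (simp add: eq_divide_eq algebra_simps)
    ultimately show ?thesis by (rule upper)
  next
    case 2
    moreover from e(1) 2 have "t2 = 0" by simp
    moreover from e(3) 2 have "t4 = (s3*t1 - s1*t3 + s4*t3)/s3" by (simp add: eq_divide_eq algebra_simps)
    ultimately show ?thesis by (rule lower)
  next
    case 3
    then show ?thesis by (rule scalar)
  next
    case 4
    moreover have "t2 * (s1 - s4) = 0" "t3 * (s1 - s4) = 0"
      using entries(2,3) 4 by (simp_all add: algebra_simps)
    ultimately show ?thesis by (intro diagonal) auto
  qed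
qed

text \<open>No determinant hypothesis is needed: for \<open>a d = 0\<close> both images of \<open>\<sigma>\<^sub>1\<^sup>-\<^sup>1\<close> are 0,
  as \<open>inv2\<close> divides by the determinant.\<close>
lemma equivalent_rep_conj_diagonal:
  "equivalent_rep (loc_rep (m2 a 0 0 d) (m2 e 0 0 e) (m2 f 0 0 k) I2)
     (loc_rep (m2 a (d - a) 0 d) (m2 e 0 0 e) (m2 f (k - f) 0 k) I2)"
  unfolding equivalent_rep_def
proof (intro exI conjI allI)
  let ?P = "mat3 1 1 0 0 1 0 0 0 1" and ?Q = "mat3 1 (-1) 0 0 1 0 0 0 1"
  show "?P \<in> carrier_mat 3 3" "?Q \<in> carrier_mat 3 3" "?P * ?Q = 1\<^sub>m 3" "?Q * ?P = 1\<^sub>m 3"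
    by (simp_all add: mat3_carrier mat3_mult one_mat_3_eq_mat3)
  fix x
  show "?P * loc_rep (m2 a 0 0 d) (m2 e 0 0 e) (m2 f 0 0 k) I2 x * ?Q =
      loc_rep (m2 a (d - a) 0 d) (m2 e 0 0 e) (m2 f (k - f) 0 k) I2 x"
    by (cases x) (simp_all add: loc_rep_def I2_def inv2_m2 oplus1_m2 one_oplus_m2 mat3_mult
        mat3_eq_iff diff_divide_distrib)
qed

lemma equivalent_to_family_scalar_involution:
  assumes e: "e = 1 \<or> e = -1"
    and ST: "m2 s1 s2 s3 s4 * m2 t1 t2 t3 t4 = m2 t1 t2 t3 t4 * m2 s1 s2 s3 s4"
    and det: "s1*s4 - s2*s3 \<noteq> 0"
  shows "equivalent_to_family (loc_rep (m2 s1 s2 s3 s4) (m2 e 0 0 e) (m2 t1 t2 t3 t4) I2)"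
  using ST
proof (cases rule: m2_commute_cases)
  case upper
  then have "family 3 (m2 s1 s2 s3 s4) (m2 (-1) 0 0 (-1)) (m2 t1 t2 t3 t4) I2"
    "family 4 (m2 s1 s2 s3 s4) (m2 1 0 0 1) (m2 t1 t2 t3 t4) I2"
    using family_3I[OF det] family_4I[OF det] by simp_all
  from e this[THEN family_imp_equivalent_to_family] show ?thesis by auto
next
  case lower
  then have "s1*s4 \<noteq> 0" using det by simp
  with lower have "family 6 (m2 s1 s2 s3 s4) (m2 (-1) 0 0 (-1)) (m2 t1 t2 t3 t4) I2"
    "family 10 (m2 s1 s2 s3 s4) (m2 1 0 0 1) (m2 t1 t2 t3 t4) I2"
    using family_6I family_10I by simp_all
  from e this[THEN family_imp_equivalent_to_family] show ?thesis by auto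
next
  case scalar
  then have "s1 \<noteq> 0" using det by simp
  with scalar have "family 5 (m2 s1 s2 s3 s4) (m2 (-1) 0 0 (-1)) (m2 t1 t2 t3 t4) I2"
    "family 9 (m2 s1 s2 s3 s4) (m2 1 0 0 1) (m2 t1 t2 t3 t4) I2"
    using family_5I family_9I by simp_all
  from e this[THEN family_imp_equivalent_to_family] show ?thesis by auto
next
  case diagonal
  then have "s1*s4 \<noteq> 0" using det by simp
  from e show ?thesis
  proof
    assume "e = 1"
    with diagonal \<open>s1*s4 \<noteq> 0\<close>
    have "family 13 (m2 s1 s2 s3 s4) (m2 e 0 0 e) (m2 t1 t2 t3 t4) I2"
      using family_13I by simp
    then show ?thesis by (rule family_imp_equivalent_to_family)
  next
    assume "e = -1"
    have "s4 - s1 \<noteq> 0" using diagonal by simp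
    then have "((s4 - s1)*t1 - s1*(t4 - t1) + s4*(t4 - t1)) / (s4 - s1) = t4"
      by (simp add: field_simps)
    then have fam: "family 3 (m2 s1 (s4 - s1) 0 s4) (m2 e 0 0 e) (m2 t1 (t4 - t1) 0 t4) I2"
      using family_3I[of s1 s4 "s4 - s1" 0 t1 "t4 - t1"] \<open>e = -1\<close> \<open>s4 - s1 \<noteq> 0\<close> \<open>s1*s4 \<noteq> 0\<close>
      by simp
    have "equivalent_rep (loc_rep (m2 s1 s2 s3 s4) (m2 e 0 0 e) (m2 t1 t2 t3 t4) I2)
        (loc_rep (m2 s1 (s4 - s1) 0 s4) (m2 e 0 0 e) (m2 t1 (t4 - t1) 0 t4) I2)"
      using equivalent_rep_conj_diagonal diagonal by simp
    with fam show ?thesis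
      unfolding equivalent_to_family_def by (intro bexI[OF _ family_index[OF fam]] exI conjI)
  qed
qed

lemma family_of_triangular_involution:
  assumes e: "e = 1 \<or> e = -1"
    and RS: "m2 e 0 y (-e) * m2 s1 s2 s3 s4 = m2 s1 s2 s3 s4 * m2 e 0 y (-e)"
    and RT: "m2 e 0 y (-e) * m2 t1 t2 t3 t4 = m2 t1 t2 t3 t4 * m2 e 0 y (-e)"
    and det: "s1*s4 - s2*s3 \<noteq> 0"
  shows "\<exists>i. family i (m2 s1 s2 s3 s4) (m2 e 0 y (-e)) (m2 t1 t2 t3 t4) I2"
proof -
  have commute: "b = 0 \<and> y*d = y*a - 2*e*c"
    if "m2 e 0 y (-e) * m2 a b c d = m2 a b c d * m2 e 0 y (-e)" for a b c d
  proof -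
    have "e * b = - (b * e)" "y*a - e*c = c*e + d*y" using that by (simp_all add: m2_mult m2_eq_iff)
    moreover have "e \<noteq> 0" using e by auto
    ultimately show ?thesis by (simp add: algebra_simps)
  qed
  have s: "s2 = 0" "y*s4 = y*s1 - 2*e*s3" and t: "t2 = 0" "y*t4 = y*t1 - 2*e*t3"
    using commute[OF RS] commute[OF RT] by simp_all
  have d: "s1*s4 \<noteq> 0" using det s by simp
  show ?thesis
  proof (cases "y = 0")
    case True
    with s t e have "s3 = 0" "t3 = 0" by auto
    from e show ?thesis
    proof
      assume "e = 1"
      then have "family 11 (m2 s1 s2 s3 s4) (m2 e 0 y (-e)) (m2 t1 t2 t3 t4) I2"
        using family_11I[OF d] True s(1) t(1) \<open>s3 = 0\<close> \<open>t3 = 0\<close> by simp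
      then show ?thesis ..
    next
      assume "e = -1"
      then have "family 12 (m2 s1 s2 s3 s4) (m2 e 0 y (-e)) (m2 t1 t2 t3 t4) I2"
        using family_12I[OF d] True s(1) t(1) \<open>s3 = 0\<close> \<open>t3 = 0\<close> by simp
      then show ?thesis ..
    qed
  next
    case False
    then have s4: "s4 = (-2*e*s3 + s1*y)/y" and t4: "t4 = (-2*e*t3 + t1*y)/y"
      using s t by (simp_all add: eq_divide_eq algebra_simps)
    have nz: "s1 * (-2*e*s3 + s1*y) \<noteq> 0" using d False by (simp add: s4)
    from e show ?thesis
    proof
      assume "e = 1"
      then have "family 7 (m2 s1 s2 s3 s4) (m2 e 0 y (-e)) (m2 t1 t2 t3 t4) I2"
        using family_7I[OF _ False] nz by (simp add: s4 t4 s(1) t(1))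
      then show ?thesis ..
    next
      assume "e = -1"
      then have "family 8 (m2 s1 s2 s3 s4) (m2 e 0 y (-e)) (m2 t1 t2 t3 t4) I2"
        using family_8I[OF _ False] nz by (simp add: s4 t4 s(1) t(1))
      then show ?thesis ..
    qed
  qed
qed

lemma equivalent_to_family_commuting_involution:
  assumes "S \<in> carrier_mat 2 2" "R \<in> carrier_mat 2 2" "T \<in> carrier_mat 2 2" "GL2 S"
    and RR: "R * R = 1\<^sub>m 2" and RS: "R * S = S * R" and RT: "R * T = T * R" and ST: "S * T = T * S"
  shows "equivalent_to_family (loc_rep S R T I2)"
proof -
  obtain s1 s2 s3 s4 where S: "S = m2 s1 s2 s3 s4" using assms(1) by (rule carrier_mat_2_obtain_m2)
  obtain r1 r2 r3 r4 where R: "R = m2 r1 r2 r3 r4" using assms(2) by (rule carrier_mat_2_obtain_m2)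
  obtain t1 t2 t3 t4 where T: "T = m2 t1 t2 t3 t4" using assms(3) by (rule carrier_mat_2_obtain_m2)
  have det: "s1*s4 - s2*s3 \<noteq> 0" using assms(4) S GL2_m2_det_nonzero by simp
  show ?thesis
  proof (cases "r2 = 0")
    case False
    with RR RS RT det have "family 2 S R T I2"
      unfolding S R T by (rule family_2_of_nontriangular_involution)
    then show ?thesis by (rule family_imp_equivalent_to_family)
  next
    case True
    have "r1 * r1 = 1" "r4 * r4 = 1" "r3 * r1 + r4 * r3 = 0"
      using RR True by (simp_all add: R m2_mult one_mat_2_eq_m2 m2_eq_iff)
    then have "r1 = 1 \<or> r1 = -1" "r4 = 1 \<or> r4 = -1" "r3 * (r1 + r4) = 0"
      by (simp_all add: power2_eq_1_iff[symmetric] power2_eq_square algebra_simps)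
    then consider "r4 = r1" "r3 = 0" "r1 = 1 \<or> r1 = -1" | "r4 = - r1" "r1 = 1 \<or> r1 = -1"
      by auto
    then show ?thesis
    proof cases
      case 1
      with ST det True show ?thesis
        unfolding S R T by (simp add: equivalent_to_family_scalar_involution)
    next
      case 2
      then have R': "R = m2 r1 0 r3 (- r1)" using R True by simp
      have "\<exists>i. family i S R T I2"
        unfolding S R' T
        by (rule family_of_triangular_involution) (use 2 RS RT det in \<open>simp_all add: S R' T\<close>)
      then obtain i where "family i S R T I2" ..
      then show ?thesis by (rule family_imp_equivalent_to_family)
    qed
  qed
qed

lemma homogeneous_local_rep_equivalent_to_family:
  assumes "homogeneous_local_rep eta"
  shows "equivalent_to_family eta"
proof -
  obtain S R T G where eta: "eta = loc_rep S R T G" and "GL2 S"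
    and carrier: "S \<in> carrier_mat 2 2" "R \<in> carrier_mat 2 2" "T \<in> carrier_mat 2 2"
    and rels: "R * R = 1\<^sub>m 2" "R * S = S * R" "R * T = T * R" "S * T = T * S"
    and gamma: "G = I2 \<or> G = m2 (-1) 0 0 1 \<and> R $$ (0,0) = 0 \<and> R $$ (1,1) = 0"
    using assms by (rule homogeneous_local_rep_normal_form)
  from gamma show ?thesis
  proof
    assume "G = I2"
    with carrier \<open>GL2 S\<close> rels show ?thesis
      unfolding eta by (simp add: equivalent_to_family_commuting_involution)
  next
    assume G: "G = m2 (-1) 0 0 1 \<and> R $$ (0,0) = 0 \<and> R $$ (1,1) = 0"
    have "family 1 S R T (m2 (-1) 0 0 1)"
      by (rule family_1_of_antidiagonal_involution[OF carrier \<open>GL2 S\<close> rels(1-3)]) (use G in simp_all)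
    then show ?thesis unfolding eta using G by (simp add: family_imp_equivalent_to_family)
  qed
qed

section \<open>Extension to \<open>STVG\<^sub>2\<close>\<close>

lemma STVG2_rep_ext_G:
  assumes rep: "STVB2_rep eta"
    and Tb: "Tb \<in> carrier_mat 3 3" "eta Tau * Tb = 1\<^sub>m 3" "Tb * eta Tau = 1\<^sub>m 3"
  shows "STVG2_rep (ext_G eta Tb)"
proof -
  have carrier: "\<And>x. eta x \<in> carrier_mat 3 3" using rep unfolding STVB2_rep_def by blast
  note rels = STVB2_rep_relations[OF rep]
  have Sig_Tb: "eta Sig * Tb = Tb * eta Sig"
    by (rule commute_imp_commute_inverse[OF carrier carrier Tb(1) rels(9) Tb(2,3)])
  have gamma_inv: "(eta Gam2 * eta Gam1) * (eta Gam1 * eta Gam2) = 1\<^sub>m 3"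
    "(eta Gam1 * eta Gam2) * (eta Gam2 * eta Gam1) = 1\<^sub>m 3"
  proof -
    have "(eta Gam2 * eta Gam1) * (eta Gam1 * eta Gam2) = eta Gam2 * (eta Gam1 * eta Gam1) * eta Gam2"
      "(eta Gam1 * eta Gam2) * (eta Gam2 * eta Gam1) = eta Gam1 * (eta Gam2 * eta Gam2) * eta Gam1"
      using carrier by (simp_all add: square_mat_simps[where n = 3])
    then show "(eta Gam2 * eta Gam1) * (eta Gam1 * eta Gam2) = 1\<^sub>m 3"
      "(eta Gam1 * eta Gam2) * (eta Gam2 * eta Gam1) = 1\<^sub>m 3"
      using carrier rels(4,5) by (simp_all add: square_mat_simps[where n = 3])
  qed
  have "eta Rho * Tb * eta Rho = (eta Gam2 * eta Gam1) * Tb * (eta Gam1 * eta Gam2)"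
  proof (rule conj_eq_imp_conj_inverse_eq[where n = 3])
    show "eta Rho * eta Tau * eta Rho = (eta Gam2 * eta Gam1) * eta Tau * (eta Gam1 * eta Gam2)"
      using rels(10) carrier by (simp add: square_mat_simps[where n = 3])
  qed (use carrier Tb rels(3) gamma_inv in \<open>auto intro: mult_carrier_mat\<close>)
  then have Rho_Tb: "eta Rho * (Tb * eta Rho) = eta Gam2 * (eta Gam1 * (Tb * (eta Gam1 * eta Gam2)))"
    using carrier Tb(1) by (simp add: square_mat_simps[where n = 3])
  have inv: "invertible_mat (ext_G eta Tb x)" for x
    using invertible_matI[OF carrier carrier rels(1,2)] invertible_matI[OF carrier carrier rels(3,3)]
      invertible_matI[OF carrier Tb(1) Tb(2,3)] invertible_matI[OF Tb(1) carrier Tb(3,2)]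
      invertible_matI[OF carrier carrier rels(4,4)] invertible_matI[OF carrier carrier rels(5,5)]
    by (cases x) (simp_all add: ext_G_def)
  show ?thesis
    unfolding STVG2_rep_def
    using carrier Tb inv rels Sig_Tb Rho_Tb
    by (auto simp: STVG2_rels_def ev_def ext_G_def right_mult_one_mat[OF carrier]
        right_mult_one_mat[OF Tb(1)] split: ggen.split)
qed

theorem theorem4p1:
  fixes eta :: "bgen \<Rightarrow> complex mat"
  assumes "homogeneous_local_rep eta"
  shows "(\<exists>i \<in> {1..13}. \<exists>S R T G. family i S R T G \<and> equivalent_rep eta (loc_rep S R T G))
       \<and> (invertible_mat (eta Tau) \<longrightarrow>
            (\<forall>Tb. Tb \<in> carrier_mat 3 3 \<and> eta Tau * Tb = 1\<^sub>m 3 \<and> Tb * eta Tau = 1\<^sub>m 3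
                  \<longrightarrow> STVG2_rep (ext_G eta Tb)))"
proof
  show "\<exists>i \<in> {1..13}. \<exists>S R T G. family i S R T G \<and> equivalent_rep eta (loc_rep S R T G)"
    using homogeneous_local_rep_equivalent_to_family[OF assms] unfolding equivalent_to_family_def .
  have "STVB2_rep eta" using assms unfolding homogeneous_local_rep_def by blast
  then show "invertible_mat (eta Tau) \<longrightarrow>
      (\<forall>Tb. Tb \<in> carrier_mat 3 3 \<and> eta Tau * Tb = 1\<^sub>m 3 \<and> Tb * eta Tau = 1\<^sub>m 3
            \<longrightarrow> STVG2_rep (ext_G eta Tb))"
    by (blast intro: STVG2_rep_ext_G)
qed

end
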